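(* Let $a,b,c,d,e\in\mathbb C$ with $a\notin\mathbb Z$ and $e\notin\{0,-1,-2,\dots\}$. Then, as an identity of formal power series in $x,y$, $$H_2(a,b,c,d;e;x,y)=F(a,b;e;x)\,F(c,d;1-a;-y)+\sum_{k=1}^\infty\sum_{l=1}^k\frac{(-1)^{k+l}(k-1)!}{(l-1)!\,l!\,(k-l)!}\,\frac{(b)_k(c)_l(d)_l}{(1-a)_l(e)_k}\,x^ky^l\,F(a+k,b+k;e+k;x)\,F(c+l,d+l;1-a+l;-y).$$
   Context: Pochhammer symbol: $(\lambda)_k=\Gamma(\lambda+k)/\Gamma(\lambda)$ for every integer $k$ (possibly negative) whenever defined; in particular $(\lambda)_0=1$ and $(\lambda)_k=\lambda(\lambda+1)\cdots(\lambda+k-1)$ for $k\ge1$. Gauss function $F(a,b;c;x)=\sum_{k\ge0}\frac{(a)_k(b)_k}{(c)_k k!}x^k$. Horn's function $H_2(a,b,c,d;e;x,y)=\sum_{p,q\ge0}\frac{(a)_{p-q}(b)_p(c)_q(d)_q}{(e)_p\,p!\,q!}x^py^q$. All functions are regarded as formal power series in $x,y$; products of functions are products of power series; the infinite double sum converges in the formal (degree) topology since its $(k,l)$ term has total degree at least $k+l$. *)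

theory Defs
  imports Complex_Main "HOL-Computational_Algebra.Formal_Power_Series"
begin

text \<open>Bivariate formal power series in x,y are modelled as complex fps fps:
  the outer variable is x, the inner variable is y.\<close>

definition poch_int :: "complex \<Rightarrow> int \<Rightarrow> complex" where
  "poch_int a n = (if 0 \<le> n then pochhammer a (nat n)
     else 1 / pochhammer (a - of_nat (nat (- n))) (nat (- n)))"

definition gauss :: "complex \<Rightarrow> complex \<Rightarrow> complex \<Rightarrow> complex fps" where
  "gauss a b c = Abs_fps (\<lambda>k. pochhammer a k * pochhammer b k / (pochhammer c k * fact k))"

definition horn_H2 :: "complex \<Rightarrow> complex \<Rightarrow> complex \<Rightarrow> complex \<Rightarrow> complex \<Rightarrow> complex fps fps" where
  "horn_H2 a b c d e = Abs_fps (\<lambda>p. Abs_fps (\<lambda>q.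
     poch_int a (int p - int q) * pochhammer b p * pochhammer c q * pochhammer d q
       / (pochhammer e p * fact p * fact q)))"

definition inX :: "complex fps \<Rightarrow> complex fps fps" where
  "inX f = Abs_fps (\<lambda>p. fps_const (fps_nth f p))"

definition inY :: "complex fps \<Rightarrow> complex fps fps" where
  "inY f = fps_const f"

abbreviation X2 :: "complex fps fps" where "X2 \<equiv> fps_X"
abbreviation Y2 :: "complex fps fps" where "Y2 \<equiv> fps_const fps_X"

text \<open>Formal double sum: the limit in the degree topology of a family whose
  (k,l) term has total degree at least k+l; coefficient (p,q) collects
  the finitely many contributions with k+l \<le> p+q.\<close>
definition fps2_sum :: "(nat \<Rightarrow> nat \<Rightarrow> complex fps fps) \<Rightarrow> complex fps fps" where
  "fps2_sum T = Abs_fps (\<lambda>p. Abs_fps (\<lambda>q.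
     \<Sum>(k,l) \<in> {(k,l). k + l \<le> p + q}. fps_nth (fps_nth (T k l) p) q))"

end

theory Submission
  imports Defs
begin

(* Compare coefficients of x^p y^q.  Since (a)_(p-q) = (-1)^q (a-q)_p / (1-a)_q when a is not an
   integer, the coefficients of all three series are a common factor c_pq times a polynomial in a:
   (a-q)_p for H2, (a)_p for the product of Gauss functions, and
   (-1)^k C(k-1,l-1) C(q,l) p!/(p-k)! (a+k)_(p-k) for the (k,l) correction term.  The theorem thus
   reduces to expanding (a-q)_p = sum_k (-1)^k C(p,k) (q)_k (a+k)_(p-k) (Chu-Vandermonde after a
   reflection) and then (q)_k = k! C(q+k-1,k) = k! sum_l C(k-1,l-1) C(q,l) (Vandermonde) for
   k >= 1; the term k = 0 is (a)_p. *)

unbundle fps_syntax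

lemma pochhammer_diff_expansion:
  fixes a x :: "'a::comm_ring_1"
  shows "pochhammer (a - x) p =
    (\<Sum>k\<le>p. (-1)^k * of_nat (p choose k) * pochhammer x k * pochhammer (a + of_nat k) (p - k))"
proof -
  \<comment> \<open>reflect \<open>(a - x)\<^sub>p\<close>, expand by Vandermonde's convolution, reflect each factor back\<close>
  have flip: "pochhammer (1 - a - of_nat p) (p - k) = (-1)^(p - k) * pochhammer (a + of_nat k) (p - k)"
    if "k \<le> p" for k
    using pochhammer_minus[of "a + of_nat p - 1" "p - k"] that
    by (simp add: of_nat_diff algebra_simps)
  have sign: "(-1::'a)^p * (-1)^(p - k) = (-1)^k" if "k \<le> p" for k
  proof -
    have "p + (p - k) = k + 2 * (p - k)" using that by simp
    then show ?thesis by (simp only: power_add[symmetric]) (simp add: power_add power_mult)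
  qed
  have "pochhammer (a - x) p = (-1)^p * pochhammer (x + (1 - a - of_nat p)) p"
    using pochhammer_minus[of "x - a" p] by (simp add: algebra_simps)
  also have "\<dots> = (\<Sum>k\<le>p. (-1)^p * of_nat (p choose k) * pochhammer x k * pochhammer (1 - a - of_nat p) (p - k))"
    by (simp add: pochhammer_binomial_sum sum_distrib_left mult.assoc)
  also have "\<dots> = (\<Sum>k\<le>p. (-1)^k * of_nat (p choose k) * pochhammer x k * pochhammer (a + of_nat k) (p - k))"
  proof (rule sum.cong[OF refl])
    fix k assume "k \<in> {..p}"
    then have "k \<le> p" by simp
    have "(-1)^p * of_nat (p choose k) * pochhammer x k * pochhammer (1 - a - of_nat p) (p - k)
        = ((-1)^p * (-1)^(p - k)) * of_nat (p choose k) * pochhammer x k * pochhammer (a + of_nat k) (p - k)"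
      using flip[OF \<open>k \<le> p\<close>] by (simp add: mult_ac)
    then show "(-1)^p * of_nat (p choose k) * pochhammer x k * pochhammer (1 - a - of_nat p) (p - k)
        = (-1)^k * of_nat (p choose k) * pochhammer x k * pochhammer (a + of_nat k) (p - k)"
      by (simp only: sign[OF \<open>k \<le> p\<close>])
  qed
  finally show ?thesis .
qed

lemma sum_choose_pred_choose:
  assumes "1 \<le> k"
  shows "(\<Sum>l\<le>q. if 1 \<le> l \<and> l \<le> k then (k - 1 choose (l - 1)) * (q choose l) else 0)
    = (q + k - 1) choose k"
proof -
  define h where "h l = (if l \<le> k then (q choose l) * (k - 1 choose (k - l)) else 0)" for l
  have summand: "(if 1 \<le> l \<and> l \<le> k then (k - 1 choose (l - 1)) * (q choose l) else 0) = h l" for l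
    using assms binomial_symmetric[of "l - 1" "k - 1"] by (cases "l = 0") (auto simp: h_def)
  have "(\<Sum>l\<le>q. h l) = (\<Sum>l\<le>q + k. h l)"
    by (rule sum.mono_neutral_left) (auto simp: h_def)
  also have "\<dots> = (\<Sum>l\<le>k. (q choose l) * (k - 1 choose (k - l)))"
    by (subst sum.mono_neutral_right[of "{..q + k}" "{..k}"]) (auto simp: h_def)
  also have "\<dots> = (q + (k - 1)) choose k"
    by (rule vandermonde)
  finally show ?thesis
    unfolding summand using assms by simp
qed

lemma pochhammer_of_nat_eq_choose_sum:
  assumes "1 \<le> k"
  shows "pochhammer (of_nat q :: 'a::field_char_0) k
    = fact k * of_nat (\<Sum>l\<le>q. if 1 \<le> l \<and> l \<le> k then (k - 1 choose (l - 1)) * (q choose l) else 0)"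
proof -
  have "of_nat ((q + k - 1) choose k) = (of_nat (q + k - 1) :: 'a) gchoose k"
    by (simp add: binomial_gbinomial)
  also have "\<dots> = pochhammer (of_nat (q + k - 1) - of_nat k + 1) k / fact k"
    by (rule gbinomial_pochhammer')
  also have "of_nat (q + k - 1) - of_nat k + 1 = (of_nat q :: 'a)"
    using assms by (simp add: of_nat_diff)
  finally have "pochhammer (of_nat q :: 'a) k = fact k * of_nat ((q + k - 1) choose k)"
    by (simp add: field_simps)
  then show ?thesis
    by (simp only: sum_choose_pred_choose[OF assms])
qed

definition pochhammer_diff_summand :: "'a::field_char_0 \<Rightarrow> nat \<Rightarrow> nat \<Rightarrow> nat \<Rightarrow> nat \<Rightarrow> 'a" where
  "pochhammer_diff_summand a p q k l = (if 1 \<le> l \<and> l \<le> k then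
     (-1)^k * of_nat (k - 1 choose (l - 1)) * of_nat (q choose l) * fact p / fact (p - k)
       * pochhammer (a + of_nat k) (p - k) else 0)"

lemma pochhammer_diff_of_nat:
  fixes a :: "'a::field_char_0"
  shows "pochhammer (a - of_nat q) p
    = pochhammer a p + (\<Sum>k\<le>p. \<Sum>l\<le>q. pochhammer_diff_summand a p q k l)"
proof -
  have summand: "(-1)^k * of_nat (p choose k) * pochhammer (of_nat q) k * pochhammer (a + of_nat k) (p - k)
     = (if k = 0 then pochhammer a p else 0) + (\<Sum>l\<le>q. pochhammer_diff_summand a p q k l)"
    if "k \<le> p" for k
  proof (cases "k = 0")
    case False
    then have "1 \<le> k" by simp
    have "(\<Sum>l\<le>q. pochhammer_diff_summand a p q k l)
      = (-1)^k * fact p / fact (p - k) * pochhammer (a + of_nat k) (p - k)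
        * of_nat (\<Sum>l\<le>q. if 1 \<le> l \<and> l \<le> k then (k - 1 choose (l - 1)) * (q choose l) else 0)"
      unfolding of_nat_sum sum_distrib_left pochhammer_diff_summand_def
      by (rule sum.cong[OF refl]) simp
    also have "\<dots> = (-1)^k * of_nat (p choose k) * pochhammer (of_nat q) k * pochhammer (a + of_nat k) (p - k)"
      using that by (simp add: pochhammer_of_nat_eq_choose_sum[OF \<open>1 \<le> k\<close>] binomial_fact field_simps)
    finally show ?thesis
      using False by simp
  qed (auto simp: pochhammer_diff_summand_def intro!: sum.neutral)
  have "pochhammer (a - of_nat q) p = (\<Sum>k\<le>p. (if k = 0 then pochhammer a p else 0)
      + (\<Sum>l\<le>q. pochhammer_diff_summand a p q k l))"
    unfolding pochhammer_diff_expansion by (rule sum.cong[OF refl]) (simp add: summand)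
  then show ?thesis
    by (simp add: sum.distrib)
qed

lemma pochhammer_nonzero_if_notin_Ints:
  assumes "z \<notin> \<int>"
  shows "pochhammer z n \<noteq> (0::'a::field_char_0)"
proof
  assume "pochhammer z n = 0"
  then obtain k where "z = - of_nat k"
    by (auto simp: pochhammer_eq_0_iff)
  with assms show False
    by simp
qed

lemma pochhammer_nonzero_if_not_nonpos_int:
  assumes "\<forall>n::nat. e \<noteq> - of_nat n"
  shows "pochhammer (e + of_nat k) n \<noteq> (0::'a::field_char_0)"
proof
  assume "pochhammer (e + of_nat k) n = 0"
  then obtain j where "e + of_nat k = - of_nat j"
    by (auto simp: pochhammer_eq_0_iff)
  then have "e = - of_nat (j + k)"
    by (simp add: algebra_simps)
  with assms show False
    by blast
qed

lemma poch_int_diff_eq: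
  fixes a :: complex
  assumes "a \<notin> \<int>"
  shows "poch_int a (int p - int q) * pochhammer (1 - a) q = (-1)^q * pochhammer (a - of_nat q) p"
proof -
  have reflect: "pochhammer (1 - a) q = (-1)^q * pochhammer (a - of_nat q) q"
    using pochhammer_minus[of "a - 1" q] by (simp add: algebra_simps)
  show ?thesis
  proof (cases "q \<le> p")
    case True
    then have "pochhammer (a - of_nat q) p = pochhammer (a - of_nat q) q * pochhammer a (p - q)"
      using pochhammer_product[of q p "a - of_nat q"] by simp
    with True show ?thesis
      by (simp add: poch_int_def reflect nat_diff_distrib)
  next
    case False
    then have "pochhammer (a - of_nat q) q
        = pochhammer (a - of_nat q) p * pochhammer (a - of_nat (q - p)) (q - p)"
      using pochhammer_product[of p q "a - of_nat q"] by (simp add: of_nat_diff algebra_simps)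
    moreover have "pochhammer (a - of_nat (q - p)) (q - p) \<noteq> 0"
      using assms by (simp add: pochhammer_nonzero_if_notin_Ints)
    ultimately show ?thesis
      using False by (simp add: poch_int_def reflect nat_diff_distrib of_nat_diff)
  qed
qed

lemma fps_compose_uminus_X_nth:
  "fps_compose f (- fps_X :: 'a::comm_ring_1 fps) $ n = (-1)^n * f $ n"
  by (simp add: fps_compose_uminus')

lemma inX_mult_inY_nth: "(inX f * inY g) $ p $ q = f $ p * g $ q"
  by (simp add: inX_def inY_def)

lemma monomial_mult_inX_inY_nth:
  "(fps_const (fps_const C) * X2^k * Y2^l * inX f * inY g) $ p $ q =
     (if k \<le> p \<and> l \<le> q then C * f $ (p - k) * g $ (q - l) else 0)"
proof -
  have factor: "fps_const (fps_const C) * X2^k * Y2^l * inX f * inY g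
      = fps_X^k * (inX f * fps_const (fps_const C * fps_X^l * g))"
    by (simp add: inY_def fps_const_power[symmetric] fps_const_mult[symmetric]
        del: fps_const_power fps_const_mult)
  show ?thesis
    unfolding factor by (simp add: fps_X_power_mult_nth inX_def mult.assoc)
qed

lemma fps2_sum_nth:
  assumes "\<And>k l. T k l $ p $ q \<noteq> 0 \<Longrightarrow> k \<le> p \<and> l \<le> q"
  shows "fps2_sum T $ p $ q = (\<Sum>k\<le>p. \<Sum>l\<le>q. T k l $ p $ q)"
proof -
  have "finite {(k, l). k + l \<le> p + q}"
    by (rule finite_subset[of _ "{..p + q} \<times> {..p + q}"]) auto
  then have "fps2_sum T $ p $ q = (\<Sum>(k, l)\<in>{..p} \<times> {..q}. T k l $ p $ q)"
    unfolding fps2_sum_def using assms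
    by (auto intro!: sum.mono_neutral_right)
  then show ?thesis
    by (simp add: sum.cartesian_product)
qed

definition horn_H2_scale :: "complex \<Rightarrow> complex \<Rightarrow> complex \<Rightarrow> complex \<Rightarrow> complex \<Rightarrow> nat \<Rightarrow> nat \<Rightarrow> complex" where
  "horn_H2_scale a b c d e p q = (-1)^q * pochhammer b p * pochhammer c q * pochhammer d q
     / (pochhammer e p * pochhammer (1 - a) q * fact p * fact q)"

lemma horn_H2_nth:
  assumes "a \<notin> \<int>"
  shows "horn_H2 a b c d e $ p $ q = horn_H2_scale a b c d e p q * pochhammer (a - of_nat q) p"
proof -
  have "pochhammer (1 - a) q \<noteq> 0"
    using assms by (simp add: pochhammer_nonzero_if_notin_Ints)
  then have "poch_int a (int p - int q) = (-1)^q * pochhammer (a - of_nat q) p / pochhammer (1 - a) q"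
    using poch_int_diff_eq[OF assms, of p q] by (simp add: field_simps)
  then show ?thesis
    by (simp add: horn_H2_def horn_H2_scale_def mult_ac)
qed

lemma gauss_product_nth:
  "(inX (gauss a b e) * inY (fps_compose (gauss c d (1 - a)) (- fps_X))) $ p $ q
     = horn_H2_scale a b c d e p q * pochhammer a p"
  by (simp add: inX_mult_inY_nth fps_compose_uminus_X_nth gauss_def horn_H2_scale_def mult_ac)

definition horn_H2_correction_coeff :: "complex \<Rightarrow> complex \<Rightarrow> complex \<Rightarrow> complex \<Rightarrow> complex \<Rightarrow> nat \<Rightarrow> nat \<Rightarrow> complex" where
  "horn_H2_correction_coeff a b c d e k l =
     (-1) ^ (k + l) * fact (k - 1) / (fact (l - 1) * fact l * fact (k - l))
       * (pochhammer b k * pochhammer c l * pochhammer d l)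
       / (pochhammer (1 - a) l * pochhammer e k)"

definition horn_H2_correction :: "complex \<Rightarrow> complex \<Rightarrow> complex \<Rightarrow> complex \<Rightarrow> complex \<Rightarrow> nat \<Rightarrow> nat \<Rightarrow> complex fps fps" where
  "horn_H2_correction a b c d e k l = (if 1 \<le> l \<and> l \<le> k then
        fps_const (fps_const (horn_H2_correction_coeff a b c d e k l)) * X2 ^ k * Y2 ^ l
        * inX (gauss (a + of_nat k) (b + of_nat k) (e + of_nat k))
        * inY (fps_compose (gauss (c + of_nat l) (d + of_nat l) (1 - a + of_nat l)) (- fps_X))
      else 0)"

lemma horn_H2_correction_nth:
  assumes "a \<notin> \<int>" and "\<forall>n::nat. e \<noteq> - of_nat n"
  shows "horn_H2_correction a b c d e k l $ p $ q = (if k \<le> p \<and> l \<le> q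
    then horn_H2_scale a b c d e p q * pochhammer_diff_summand a p q k l else 0)"
proof (cases "1 \<le> l \<and> l \<le> k \<and> k \<le> p \<and> l \<le> q")
  case True
  then have "1 \<le> l" "l \<le> k" "k \<le> p" "l \<le> q"
    by auto
  have pb: "pochhammer b p = pochhammer b k * pochhammer (b + of_nat k) (p - k)"
    and pe: "pochhammer e p = pochhammer e k * pochhammer (e + of_nat k) (p - k)"
    using pochhammer_product[OF \<open>k \<le> p\<close>] by blast+
  have pc: "pochhammer c q = pochhammer c l * pochhammer (c + of_nat l) (q - l)"
    and pd: "pochhammer d q = pochhammer d l * pochhammer (d + of_nat l) (q - l)"
    and pa: "pochhammer (1 - a) q = pochhammer (1 - a) l * pochhammer (1 - a + of_nat l) (q - l)"
    using pochhammer_product[OF \<open>l \<le> q\<close>] by blast+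
  have choose_pred: "(of_nat (k - 1 choose (l - 1)) :: complex) = fact (k - 1) / (fact (l - 1) * fact (k - l))"
    using binomial_fact[where 'a=complex, of "l - 1" "k - 1"] \<open>1 \<le> l\<close> \<open>l \<le> k\<close>
    by (simp add: Suc_diff_Suc)
  have choose_q: "(of_nat (q choose l) :: complex) = fact q / (fact l * fact (q - l))"
    using binomial_fact[of l q] \<open>l \<le> q\<close> by simp
  have sign_k_l: "(-1::complex) ^ (k + l) = (-1)^k * (-1)^l"
    by (simp add: power_add)
  have sign_q: "(-1::complex) ^ q = (-1)^l * (-1)^(q - l)"
    using \<open>l \<le> q\<close> by (simp add: power_add[symmetric])
  have "pochhammer (1 - a + of_nat l) (q - l) \<noteq> 0" "pochhammer (1 - a) l \<noteq> 0"
    using assms(1) by (simp_all add: pochhammer_nonzero_if_notin_Ints)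
  moreover have "pochhammer (e + of_nat k) (p - k) \<noteq> 0" "pochhammer e k \<noteq> 0"
    using pochhammer_nonzero_if_not_nonpos_int[OF assms(2), of k]
      pochhammer_nonzero_if_not_nonpos_int[OF assms(2), of 0] by simp_all
  ultimately have "horn_H2_correction_coeff a b c d e k l
      * gauss (a + of_nat k) (b + of_nat k) (e + of_nat k) $ (p - k)
      * fps_compose (gauss (c + of_nat l) (d + of_nat l) (1 - a + of_nat l)) (- fps_X) $ (q - l)
    = horn_H2_scale a b c d e p q * pochhammer_diff_summand a p q k l"
    using True
    unfolding horn_H2_correction_coeff_def horn_H2_scale_def pochhammer_diff_summand_def
      fps_compose_uminus_X_nth pb pe pc pd pa choose_pred choose_q sign_k_l sign_q
    by (simp add: gauss_def field_simps)
  moreover have "horn_H2_correction a b c d e k l $ p $ q = horn_H2_correction_coeff a b c d e k l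
      * gauss (a + of_nat k) (b + of_nat k) (e + of_nat k) $ (p - k)
      * fps_compose (gauss (c + of_nat l) (d + of_nat l) (1 - a + of_nat l)) (- fps_X) $ (q - l)"
    using True by (simp add: horn_H2_correction_def monomial_mult_inX_inY_nth del: fps_const_power)
  ultimately show ?thesis
    using True by simp
qed (auto simp: horn_H2_correction_def pochhammer_diff_summand_def monomial_mult_inX_inY_nth
    simp del: fps_const_power)

theorem mainTheorem2:
  fixes a b c d e :: complex
  assumes "a \<notin> \<int>" and "\<forall>n::nat. e \<noteq> - of_nat n"
  shows "horn_H2 a b c d e =
    inX (gauss a b e) * inY (fps_compose (gauss c d (1 - a)) (- fps_X))
    + fps2_sum (\<lambda>k l. if 1 \<le> l \<and> l \<le> k then
        fps_const (fps_const (
          (-1) ^ (k + l) * fact (k - 1) / (fact (l - 1) * fact l * fact (k - l))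
          * (pochhammer b k * pochhammer c l * pochhammer d l)
          / (pochhammer (1 - a) l * pochhammer e k)))
        * X2 ^ k * Y2 ^ l
        * inX (gauss (a + of_nat k) (b + of_nat k) (e + of_nat k))
        * inY (fps_compose (gauss (c + of_nat l) (d + of_nat l) (1 - a + of_nat l)) (- fps_X))
      else 0)"
  unfolding horn_H2_correction_coeff_def[symmetric] horn_H2_correction_def[symmetric]
proof (intro fps_ext)
  fix p q
  have "fps2_sum (horn_H2_correction a b c d e) $ p $ q
      = horn_H2_scale a b c d e p q * (\<Sum>k\<le>p. \<Sum>l\<le>q. pochhammer_diff_summand a p q k l)"
    using horn_H2_correction_nth[OF assms]
    by (subst fps2_sum_nth) (auto simp: sum_distrib_left split: if_splits)
  then show "horn_H2 a b c d e $ p $ q = (inX (gauss a b e)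
      * inY (fps_compose (gauss c d (1 - a)) (- fps_X)) + fps2_sum (horn_H2_correction a b c d e)) $ p $ q"
    by (simp add: horn_H2_nth[OF assms(1)] gauss_product_nth pochhammer_diff_of_nat distrib_left)
qed

end
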